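(* Let $p,q,r,n$ be integers with $r\ge 0$, $q\ge 2$, $p-q=2r+1$, $n=p+q$, and suppose $q\ge 2r+1$. Then the integrality gap of the clique-web inequality with parameters $n,p,q,r$ is at most $2$, i.e. $\mathrm{sdp}(\mathrm{CW}^r_p,-e)/\mathrm{ip}(\mathrm{CW}^r_p,-e)\le 2$.
   Context: For integers $p,r$ with $p\ge 2r+3$, the antiweb $\mathrm{AW}^r_p$ is the graph on $[p]$ with edges $\{i,i+s\}$ for $i\in[p]$, $1\le s\le r$ (indices mod $p$); the web $\mathrm{W}^r_p$ is its complement in $K_p$. With $p,q,r,n$ as in the claim, $\mathrm{CW}^r_p$ is the graph on $[n]$ consisting of a clique on $\{1,\dots,q\}$, a copy of $\mathrm{W}^r_p$ on $\{q+1,\dots,n\}$, and all edges $ij$ with $1\le i\le q<j\le n$. The clique-web inequality is $-\sum_{ij\in E(\mathrm{CW}^r_p)}x_{ij}\le q(r+1)$. For a graph $G=([n],E)$ and $w\in\mathbb{R}^E$, $\mathrm{ip}(G,w)=\max_{x\in\{\pm1\}^n}\sum_{ij\in E}w_{ij}x_ix_j$ and $\mathrm{sdp}(G,w)=\max\sum_{ij\in E}w_{ij}u_i^Tu_j$ over unit vectors $u_i\in\mathbb{R}^n$; $e$ denotes the all-ones vector in $\mathbb{R}^{E(\mathrm{CW}^r_p)}$. The integrality gap of the clique-web inequality is $\mathrm{sdp}(\mathrm{CW}^r_p,-e)/\mathrm{ip}(\mathrm{CW}^r_p,-e)$, where $\mathrm{ip}(\mathrm{CW}^r_p,-e)=q(r+1)$.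 *)

theory Defs
  imports Complex_Main "HOL-Library.FuncSet"
begin

text \<open>Graphs on vertex set [n] = {1..n} are given by edge sets of ordered pairs (i,j) with i < j,
  each pair representing the undirected edge ij.\<close>

definition edge :: "nat \<Rightarrow> nat \<Rightarrow> nat \<times> nat" where
  "edge i j = (min i j, max i j)"

definition antiweb :: "nat \<Rightarrow> nat \<Rightarrow> (nat \<times> nat) set" where
  "antiweb p r = {edge i (((i + s - 1) mod p) + 1) | i s. i \<in> {1..p} \<and> 1 \<le> s \<and> s \<le> r}"

definition web :: "nat \<Rightarrow> nat \<Rightarrow> (nat \<times> nat) set" where
  "web p r = {(i, j). 1 \<le> i \<and> i < j \<and> j \<le> p} - antiweb p r"

definition clique_web :: "nat \<Rightarrow> nat \<Rightarrow> nat \<Rightarrow> (nat \<times> nat) set" where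
  "clique_web p q r =
     {(i, j). 1 \<le> i \<and> i < j \<and> j \<le> q}
   \<union> {(i + q, j + q) | i j. (i, j) \<in> web p r}
   \<union> {(i, j). 1 \<le> i \<and> i \<le> q \<and> q < j \<and> j \<le> p + q}"

definition ip :: "nat \<Rightarrow> (nat \<times> nat) set \<Rightarrow> (nat \<times> nat \<Rightarrow> real) \<Rightarrow> real" where
  "ip n E w = Max {(\<Sum>(i, j)\<in>E. w (i, j) * x i * x j) | x.
                    x \<in> {1..n} \<rightarrow>\<^sub>E {-1, 1}}"

definition sdp :: "nat \<Rightarrow> (nat \<times> nat) set \<Rightarrow> (nat \<times> nat \<Rightarrow> real) \<Rightarrow> real" where
  "sdp n E w = Sup {(\<Sum>(i, j)\<in>E. w (i, j) * (\<Sum>k<n. u i k * u j k)) | u.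
                     \<forall>i\<in>{1..n}. (\<Sum>k<n. (u i k)\<^sup>2) = 1}"

end

theory Submission
  imports Defs
begin

text \<open>The clique-web graph is \<open>K\<^sub>n\<close> minus a copy of the antiweb \<open>AW\<^sup>r\<^sub>p\<close>, which has \<open>p r\<close> edges.
  For unit vectors \<open>u\<^sub>i\<close> the pair sum \<open>\<Sum>\<^sub>i\<^sub><\<^sub>j u\<^sub>i\<^sup>T u\<^sub>j = (\<parallel>\<Sum>\<^sub>i u\<^sub>i\<parallel>\<^sup>2 - n) / 2\<close> is at least \<open>-n/2\<close>, and each
  removed edge contributes at most \<open>1\<close>, so \<open>sdp \<le> n/2 + p r\<close>. The cut separating the clique from
  the web gives \<open>ip \<ge> q (r + 1)\<close>, and \<open>n/2 + p r \<le> 2 q (r + 1)\<close> is equivalent to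
  \<open>(q - 2r - 1)(r + 1) + r + 1/2 \<ge> 0\<close>.\<close>

definition complete_edges :: "nat \<Rightarrow> (nat \<times> nat) set" where
  "complete_edges n = {(i, j). 1 \<le> i \<and> i < j \<and> j \<le> n}"

lemma finite_complete_edges: "finite (complete_edges n)"
  by (rule finite_subset[of _ "{1..n} \<times> {1..n}"]) (auto simp: complete_edges_def)

lemma complete_edges_Suc:
  "complete_edges (Suc n) = complete_edges n \<union> (\<lambda>i. (i, Suc n)) ` {1..n}"
  unfolding complete_edges_def by auto

lemma sum_complete_edges_products:
  fixes a :: "nat \<Rightarrow> real"
  shows "(\<Sum>(i, j)\<in>complete_edges n. a i * a j) = ((\<Sum>i=1..n. a i)\<^sup>2 - (\<Sum>i=1..n. (a i)\<^sup>2)) / 2"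
proof (induction n)
  case 0
  have "complete_edges 0 = {}" by (auto simp: complete_edges_def)
  then show ?case by simp
next
  case (Suc n)
  have "(\<Sum>(i, j)\<in>complete_edges (Suc n). a i * a j)
      = (\<Sum>(i, j)\<in>complete_edges n. a i * a j) + (\<Sum>(i, j)\<in>(\<lambda>i. (i, Suc n)) ` {1..n}. a i * a j)"
    unfolding complete_edges_Suc
    by (rule sum.union_disjoint) (auto simp: finite_complete_edges, auto simp: complete_edges_def)
  also have "(\<Sum>(i, j)\<in>(\<lambda>i. (i, Suc n)) ` {1..n}. a i * a j) = (\<Sum>i=1..n. a i) * a (Suc n)"
    by (subst sum.reindex) (auto simp: inj_on_def sum_distrib_right)
  finally show ?case
    using Suc by (simp add: power2_eq_square algebra_simps add_divide_distrib diff_divide_distrib)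
qed

lemma mem_shift_image:
  fixes a b q :: nat
  shows "(a, b) \<in> (\<lambda>(i, j). (i + q, j + q)) ` S \<longleftrightarrow> q \<le> a \<and> q \<le> b \<and> (a - q, b - q) \<in> S"
proof
  assume "q \<le> a \<and> q \<le> b \<and> (a - q, b - q) \<in> S"
  then show "(a, b) \<in> (\<lambda>(i, j). (i + q, j + q)) ` S"
    by (intro image_eqI[of _ _ "(a - q, b - q)"]) auto
qed auto

definition antiweb_edge :: "nat \<Rightarrow> nat \<times> nat \<Rightarrow> nat \<times> nat" where
  "antiweb_edge p = (\<lambda>(i, s). edge i ((i + s - 1) mod p + 1))"

lemma antiweb_edge_eq:
  assumes "1 \<le> i" "i \<le> p" "1 \<le> s" "s < p"
  shows "antiweb_edge p (i, s) = (if i + s \<le> p then (i, i + s) else (i + s - p, i))"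
proof (cases "i + s \<le> p")
  case True
  then show ?thesis using assms by (simp add: antiweb_edge_def edge_def)
next
  case False
  then have "(i + s - 1) mod p = i + s - 1 - p"
    using assms by (simp add: le_mod_geq)
  then show ?thesis using False assms by (simp add: antiweb_edge_def edge_def)
qed

lemma antiweb_eq_image: "antiweb p r = antiweb_edge p ` ({1..p} \<times> {1..r})"
  unfolding antiweb_def antiweb_edge_def image_def by fastforce

text \<open>For \<open>p = 2 s\<close> the offsets \<open>(i, s)\<close> and \<open>(i + s, s)\<close> give the same edge, hence \<open>2 r < p\<close>.\<close>
lemma inj_on_antiweb_edge:
  assumes "2 * r < p"
  shows "inj_on (antiweb_edge p) ({1..p} \<times> {1..r})"
proof (rule inj_onI)
  fix x y
  assume "x \<in> {1..p} \<times> {1..r}" "y \<in> {1..p} \<times> {1..r}" "antiweb_edge p x = antiweb_edge p y"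
  with assms show "x = y"
    by (cases x; cases y) (simp add: antiweb_edge_eq split: if_splits; linarith)
qed

lemma card_antiweb: "2 * r < p \<Longrightarrow> card (antiweb p r) = p * r"
  unfolding antiweb_eq_image using card_image[OF inj_on_antiweb_edge] by simp

lemma antiweb_subset_complete_edges:
  assumes "r < p"
  shows "antiweb p r \<subseteq> complete_edges p"
proof
  fix e assume "e \<in> antiweb p r"
  then obtain i s where "i \<in> {1..p}" "s \<in> {1..r}" "e = antiweb_edge p (i, s)"
    unfolding antiweb_eq_image by auto
  with assms show "e \<in> complete_edges p" by (auto simp: antiweb_edge_eq complete_edges_def)
qed

definition shifted_antiweb :: "nat \<Rightarrow> nat \<Rightarrow> nat \<Rightarrow> (nat \<times> nat) set" where
  "shifted_antiweb p q r = (\<lambda>(i, j). (i + q, j + q)) ` antiweb p r"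

lemma card_shifted_antiweb: "2 * r < p \<Longrightarrow> card (shifted_antiweb p q r) = p * r"
  unfolding shifted_antiweb_def
  by (subst card_image) (auto simp: inj_on_def card_antiweb)

lemma shifted_antiweb_subset_complete_edges:
  assumes "r < p"
  shows "shifted_antiweb p q r \<subseteq> complete_edges (p + q)"
  using antiweb_subset_complete_edges[OF assms]
  by (auto simp: shifted_antiweb_def complete_edges_def)

lemma clique_web_eq_complete_edges_diff:
  assumes "r < p"
  shows "clique_web p q r = complete_edges (p + q) - shifted_antiweb p q r"
proof -
  have "{(i + q, j + q) | i j. (i, j) \<in> web p r} = (\<lambda>(i, j). (i + q, j + q)) ` web p r"
    by auto
  then show ?thesis
    using antiweb_subset_complete_edges[OF assms]
    unfolding clique_web_def shifted_antiweb_def web_def complete_edges_def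
    by (auto simp: mem_shift_image)
qed

lemma sum_products_le_one:
  fixes a b :: "nat \<Rightarrow> real"
  assumes "(\<Sum>k<m. (a k)\<^sup>2) = 1" "(\<Sum>k<m. (b k)\<^sup>2) = 1"
  shows "(\<Sum>k<m. a k * b k) \<le> 1"
proof -
  have "(\<Sum>k<m. a k * b k) \<le> (\<Sum>k<m. ((a k)\<^sup>2 + (b k)\<^sup>2) / 2)"
  proof (rule sum_mono)
    fix k
    have "0 \<le> (a k - b k)\<^sup>2" by simp
    then show "a k * b k \<le> ((a k)\<^sup>2 + (b k)\<^sup>2) / 2" by (simp add: power2_eq_square algebra_simps)
  qed
  also have "\<dots> = 1" using assms by (simp add: sum.distrib sum_divide_distrib[symmetric])
  finally show ?thesis .
qed

lemma sum_complete_edges_inner_ge: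
  fixes u :: "nat \<Rightarrow> nat \<Rightarrow> real"
  assumes "\<forall>i\<in>{1..n}. (\<Sum>k<m. (u i k)\<^sup>2) = 1"
  shows "(\<Sum>(i, j)\<in>complete_edges n. \<Sum>k<m. u i k * u j k) \<ge> - real n / 2"
proof -
  have "(\<Sum>(i, j)\<in>complete_edges n. \<Sum>k<m. u i k * u j k)
      = (\<Sum>k<m. \<Sum>(i, j)\<in>complete_edges n. u i k * u j k)"
    by (simp add: split_def sum.swap[of _ "complete_edges n"])
  also have "\<dots> = (\<Sum>k<m. ((\<Sum>i=1..n. u i k)\<^sup>2 - (\<Sum>i=1..n. (u i k)\<^sup>2)) / 2)"
    by (simp add: sum_complete_edges_products)
  also have "\<dots> \<ge> (\<Sum>k<m. - (\<Sum>i=1..n. (u i k)\<^sup>2) / 2)"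
    by (rule sum_mono) simp
  also have "(\<Sum>k<m. - (\<Sum>i=1..n. (u i k)\<^sup>2) / 2) = - (\<Sum>i=1..n. \<Sum>k<m. (u i k)\<^sup>2) / 2"
    by (simp add: sum_divide_distrib[symmetric] sum_negf sum.swap[of _ "{..<m}"])
  also have "(\<Sum>i=1..n. \<Sum>k<m. (u i k)\<^sup>2) = real n"
    using assms by simp
  finally show ?thesis by simp
qed

lemma sdp_complete_edges_diff_le:
  assumes "0 < n" "A \<subseteq> complete_edges n"
  shows "sdp n (complete_edges n - A) (\<lambda>_. -1) \<le> real n / 2 + real (card A)"
  unfolding sdp_def
proof (rule cSup_least)
  define e :: "nat \<Rightarrow> nat \<Rightarrow> real" where "e = (\<lambda>i k. if k = 0 then 1 else 0)"
  have "(\<Sum>k<n. (e i k)\<^sup>2) = (\<Sum>k<n. if k = 0 then 1 else 0)" for i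
    by (intro sum.cong) (auto simp: e_def)
  then have "\<forall>i\<in>{1..n}. (\<Sum>k<n. (e i k)\<^sup>2) = 1"
    using assms(1) by simp
  then have "\<exists>u :: nat \<Rightarrow> nat \<Rightarrow> real. \<forall>i\<in>{1..n}. (\<Sum>k<n. (u i k)\<^sup>2) = 1"
    by blast
  then show "{\<Sum>(i, j)\<in>complete_edges n - A. (\<lambda>_. -1 :: real) (i, j) * (\<Sum>k<n. u i k * u j k) | u.
      \<forall>i\<in>{1..n}. (\<Sum>k<n. (u i k)\<^sup>2) = 1} \<noteq> {}"
    by auto
next
  fix y
  assume "y \<in> {\<Sum>(i, j)\<in>complete_edges n - A. (\<lambda>_. -1 :: real) (i, j) * (\<Sum>k<n. u i k * u j k) | u.
      \<forall>i\<in>{1..n}. (\<Sum>k<n. (u i k)\<^sup>2) = 1}"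
  then obtain u where unit: "\<forall>i\<in>{1..n}. (\<Sum>k<n. (u i k)\<^sup>2) = 1"
    and y: "y = (\<Sum>(i, j)\<in>complete_edges n - A. - (\<Sum>k<n. u i k * u j k))"
    by auto
  define dot where "dot = (\<lambda>(i, j). \<Sum>k<n. u i k * u j k)"
  have "y = sum dot A - sum dot (complete_edges n)"
    unfolding y dot_def
    by (simp add: split_def sum_negf sum_diff[OF finite_complete_edges assms(2)])
  moreover have "sum dot (complete_edges n) \<ge> - real n / 2"
    using sum_complete_edges_inner_ge[OF unit] by (simp add: dot_def)
  moreover have "sum dot A \<le> real (card A) * 1"
  proof (rule sum_bounded_above)
    fix e assume "e \<in> A"
    then obtain i j where "e = (i, j)" "i \<in> {1..n}" "j \<in> {1..n}"
      using assms(2) by (auto simp: complete_edges_def)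
    then show "dot e \<le> 1"
      using unit sum_products_le_one[where m = n and a = "u i" and b = "u j"] by (simp add: dot_def)
  qed
  ultimately show "y \<le> real n / 2 + real (card A)" by simp
qed

lemma le_ip:
  assumes "x \<in> {1..n} \<rightarrow>\<^sub>E {-1, 1}"
  shows "(\<Sum>(i, j)\<in>E. w (i, j) * x i * x j) \<le> ip n E w"
proof -
  let ?val = "\<lambda>x. \<Sum>(i, j)\<in>E. w (i, j) * x i * x j"
  have "{?val x | x. x \<in> {1..n} \<rightarrow>\<^sub>E {-1, 1}} = ?val ` ({1..n} \<rightarrow>\<^sub>E {-1, 1})"
    by auto
  moreover have "finite (?val ` ({1..n} \<rightarrow>\<^sub>E {-1, 1}))"
    by (intro finite_imageI finite_PiE) auto
  ultimately show ?thesis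
    unfolding ip_def using assms by (simp add: Max_ge)
qed

lemma clique_web_cut_value:
  assumes "p = q + 2 * r + 1"
  defines "x \<equiv> restrict (\<lambda>i. if i \<le> q then -1 else 1 :: real) {1..p + q}"
  shows "(\<Sum>(i, j)\<in>clique_web p q r. - x i * x j) = real q * (real r + 1)"
proof -
  define f where "f = (\<lambda>(i, j). x i * x j)"
  have "r < p" "2 * r < p" using assms(1) by auto
  have "(\<Sum>(i, j)\<in>clique_web p q r. - x i * x j) = sum f (shifted_antiweb p q r) - sum f (complete_edges (p + q))"
    unfolding clique_web_eq_complete_edges_diff[OF \<open>r < p\<close>] f_def
    by (simp add: split_def sum_negf
        sum_diff[OF finite_complete_edges shifted_antiweb_subset_complete_edges[OF \<open>r < p\<close>]])
  moreover have "sum f (shifted_antiweb p q r) = real (p * r)"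
  proof -
    have "f e = 1" if "e \<in> shifted_antiweb p q r" for e
      using that antiweb_subset_complete_edges[OF \<open>r < p\<close>]
      by (auto simp: shifted_antiweb_def complete_edges_def f_def x_def)
    then show ?thesis by (simp add: card_shifted_antiweb[OF \<open>2 * r < p\<close>])
  qed
  moreover have "sum f (complete_edges (p + q)) = ((real p - real q)\<^sup>2 - real (p + q)) / 2"
  proof -
    have "(\<Sum>i=1..m. if i \<le> q then -1 else 1 :: real) = real m - 2 * real (min m q)" for m
      by (induction m) (auto simp: min_def)
    then have "(\<Sum>i=1..p + q. x i) = real p - real q"
      by (simp add: x_def)
    moreover have "(\<Sum>i=1..p + q. (x i)\<^sup>2) = (\<Sum>i=1..p + q. 1)"
      by (intro sum.cong) (auto simp: x_def)
    ultimately show ?thesis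
      unfolding f_def sum_complete_edges_products by simp
  qed
  ultimately show ?thesis
    using assms(1) by (simp add: power2_eq_square field_simps)
qed

theorem mainTheorem10:
  fixes p q r n :: nat
  assumes "q \<ge> 2" and "p = q + 2 * r + 1" and "n = p + q" and "q \<ge> 2 * r + 1"
  shows "sdp n (clique_web p q r) (\<lambda>_. -1) / ip n (clique_web p q r) (\<lambda>_. -1) \<le> 2"
proof -
  have "r < p" "2 * r < p" "0 < n" using assms(2,3) by auto
  define x where "x = restrict (\<lambda>i. if i \<le> q then -1 else 1 :: real) {1..n}"
  have "x \<in> {1..n} \<rightarrow>\<^sub>E {-1, 1}" by (auto simp: x_def)
  from le_ip[OF this, where E = "clique_web p q r" and w = "\<lambda>_. -1"]
  have ip: "real q * (real r + 1) \<le> ip n (clique_web p q r) (\<lambda>_. -1)"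
    using clique_web_cut_value[OF assms(2)] by (simp add: x_def assms(3))
  have "shifted_antiweb p q r \<subseteq> complete_edges n"
    using shifted_antiweb_subset_complete_edges[OF \<open>r < p\<close>] assms(3) by simp
  from sdp_complete_edges_diff_le[OF \<open>0 < n\<close> this]
  have sdp: "sdp n (clique_web p q r) (\<lambda>_. -1) \<le> real n / 2 + real (p * r)"
    by (simp add: clique_web_eq_complete_edges_diff[OF \<open>r < p\<close>] card_shifted_antiweb[OF \<open>2 * r < p\<close>]
        assms(3))
  have "(real q - (2 * real r + 1)) * (real r + 1) \<ge> 0"
    using assms(4) by simp
  then have "real n / 2 + real (p * r) \<le> 2 * (real q * (real r + 1))"
    using assms(2,3) by (simp add: field_simps)
  moreover have "0 < real q * (real r + 1)" using assms(1) by simp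
  ultimately show ?thesis
    using ip sdp by (simp add: divide_le_eq)
qed

end
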